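(* For every positive integer $k$, any $\frac19$-tester (adaptive allowed) for convexity of functions $f\colon[3^k]\to[(9k)^{3k}]$ makes $\Omega(k)$ queries.
   Context: $[m]=\{0,\dots,m-1\}$. A function $f\colon X\to\mathbb{R}$ on a finite set $X\subseteq\mathbb{R}$ is convex if for every finite collection $x_1,\dots,x_k\in X$ and reals $\lambda_i\ge0$ with $\sum_i\lambda_i=1$ and $\sum_i\lambda_ix_i\in X$, one has $f(\sum_i\lambda_ix_i)\le\sum_i\lambda_if(x_i)$. $f$ is $\epsilon$-far from convex if every convex $h$ on the same domain differs from $f$ on at least $\epsilon|X|$ points. An $\epsilon$-tester is a randomized query algorithm that accepts convex functions with probability at least $2/3$ and rejects $\epsilon$-far functions with probability at least $2/3$. *)

theory Defs
  imports "HOL-Probability.Probability"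
begin

text \<open>Domain [n] = {0,...,n-1} (as naturals, embedded into the reals).
  A function on [n] is represented as a total function on nat; convexity is
  the paper's definition for a function on a finite subset of the reals.\<close>

definition convex_fin :: "nat set \<Rightarrow> (nat \<Rightarrow> real) \<Rightarrow> bool" where
  "convex_fin D h \<longleftrightarrow>
     (\<forall>(S::nat set) (lam::nat \<Rightarrow> real) m.
        finite S \<and> S \<subseteq> D \<and> (\<forall>x\<in>S. lam x \<ge> 0) \<and> (\<Sum>x\<in>S. lam x) = 1 \<and>
        m \<in> D \<and> (\<Sum>x\<in>S. lam x * real x) = real m
        \<longrightarrow> h m \<le> (\<Sum>x\<in>S. lam x * h x))"

definition far_from_convex :: "real \<Rightarrow> nat set \<Rightarrow> (nat \<Rightarrow> real) \<Rightarrow> bool" where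
  "far_from_convex eps D f \<longleftrightarrow>
     (\<forall>h. convex_fin D h \<longrightarrow> real (card {x\<in>D. f x \<noteq> h x}) \<ge> eps * real (card D))"

text \<open>Adaptive deterministic query algorithms are decision trees: either
  output a verdict, or query a point and continue depending on the answer.\<close>
datatype dtree = Leaf bool | Query nat "nat \<Rightarrow> dtree"

primrec run :: "dtree \<Rightarrow> (nat \<Rightarrow> nat) \<Rightarrow> bool" where
  "run (Leaf b) f = b"
| "run (Query x c) f = run (c (f x)) f"

text \<open>Worst-case number of queries made by a tree on input functions f
  with values in [R] (only answers in [R] can occur).\<close>
primrec queries_le :: "nat \<Rightarrow> dtree \<Rightarrow> nat \<Rightarrow> bool" where
  "queries_le R (Leaf b) = (\<lambda>q. True)"
| "queries_le R (Query x c) = (\<lambda>q. q > 0 \<and> (\<forall>a<R. queries_le R (c a) (q - 1)))"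

definition fun_class :: "nat \<Rightarrow> nat \<Rightarrow> (nat \<Rightarrow> nat) set" where
  "fun_class n R = {f. (\<forall>x<n. f x < R) \<and> (\<forall>x\<ge>n. f x = 0)}"

text \<open>A randomized (adaptive) algorithm is a probability distribution over
  decision trees.\<close>
definition accept_prob :: "dtree pmf \<Rightarrow> (nat \<Rightarrow> nat) \<Rightarrow> real" where
  "accept_prob T f = measure_pmf.prob T {t. run t f}"

definition convexity_tester :: "real \<Rightarrow> nat \<Rightarrow> nat \<Rightarrow> dtree pmf \<Rightarrow> bool" where
  "convexity_tester eps n R T \<longleftrightarrow>
     (\<forall>f\<in>fun_class n R.
        (convex_fin {..<n} (\<lambda>x. real (f x)) \<longrightarrow> accept_prob T f \<ge> 2/3) \<and>
        (far_from_convex eps {..<n} (\<lambda>x. real (f x)) \<longrightarrow> 1 - accept_prob T f \<ge> 2/3))"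

definition makes_at_most :: "nat \<Rightarrow> dtree pmf \<Rightarrow> nat \<Rightarrow> bool" where
  "makes_at_most R T q \<longleftrightarrow> (\<forall>t\<in>set_pmf T. queries_le R t q)"

end

theory Submission
  imports Defs
begin

text \<open>By Yao's principle it suffices to find a distribution on inputs that fools every
  deterministic decision tree with few queries. Split \<open>[3^k]\<close> into level-\<open>j\<close> blocks of
  length \<open>3^(j+1)\<close>. For a set \<open>c\<close> of bits, one per level \<open>1 \<le> j < k\<close> and block, the yes-instance
  is the sum over the levels of \<open>81^j\<close> times a sawtooth whose tooth on a block is present or not
  according to \<open>c\<close>, plus a convex correction making every level convex. The no-instance for
  level \<open>i\<close> toggles the level-\<open>i\<close> teeth on the upper two thirds of every block. This creates a
  jump in each level-\<open>i\<close> block, hence \<open>3^(k-2)\<close> disjoint triples violating convexity: the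
  higher levels are affine on the block and the lower ones are too light to repair the
  violation, so the no-instance is \<open>1/9\<close>-far from convex. A tree distinguishes the yes-instance
  for \<open>c\<close> from the no-instance for level \<open>i\<close> and a suitably flipped \<open>c\<close> only if two of its
  queries lie in one level-\<open>i\<close> block but in different thirds of it, and \<open>q\<close> queries can do that
  for at most \<open>q\<close> levels. Averaging over the \<open>k - 1\<close> levels gives \<open>q \<ge> (k - 1)/3\<close>.\<close>

section \<open>Yao's principle\<close>

lemma accept_prob_eq_expectation:
  "accept_prob T f = measure_pmf.expectation T (\<lambda>t. of_bool (run t f))"
proof -
  have "accept_prob T f = measure_pmf.expectation T (indicator {t. run t f})"
    by (simp add: accept_prob_def)
  also have "indicator {t. run t f} = (\<lambda>t. of_bool (run t f) :: real)"
    by (auto simp: indicator_def)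
  finally show ?thesis .
qed

lemma yao_averaging_bound:
  fixes yes :: "'s \<Rightarrow> nat \<Rightarrow> nat" and no :: "'i \<Rightarrow> 's \<Rightarrow> nat \<Rightarrow> nat" and q :: real
  assumes "finite S" "S \<noteq> {}" "finite I"
    and yes: "\<And>c. c \<in> S \<Longrightarrow> accept_prob T (yes c) \<ge> 2/3"
    and no: "\<And>i c. i \<in> I \<Longrightarrow> c \<in> S \<Longrightarrow> 1 - accept_prob T (no i c) \<ge> 2/3"
    and advantage: "\<And>t. t \<in> set_pmf T \<Longrightarrow>
       (\<Sum>i\<in>I. \<Sum>c\<in>S. of_bool (run t (yes c)) - of_bool (run t (no i c))) \<le> q * card S"
  shows "card I / 3 \<le> q"
proof -
  define X where "X t = (\<Sum>i\<in>I. \<Sum>c\<in>S. of_bool (run t (yes c)) - of_bool (run t (no i c)) :: real)" for t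
  have integrable: "integrable (measure_pmf T) (\<lambda>t. of_bool (run t f) :: real)" for f
    by (rule measure_pmf.integrable_const_bound[where B = 1]) auto
  have "card I * card S / 3 = (\<Sum>i\<in>I. \<Sum>c\<in>S. 1/3 :: real)"
    by simp
  also have "\<dots> \<le> (\<Sum>i\<in>I. \<Sum>c\<in>S. accept_prob T (yes c) - accept_prob T (no i c))"
    by (intro sum_mono) (use yes no in force)
  also have "\<dots> = measure_pmf.expectation T X"
    unfolding X_def accept_prob_eq_expectation
    by (subst Bochner_Integration.integral_sum, use integrable in auto)+
  also have "\<dots> \<le> q * card S"
    using advantage integrable
    by (intro measure_pmf.integral_le_const) (auto simp: AE_measure_pmf_iff X_def)
  finally show ?thesis
    using assms(1,2) by (simp add: card_gt_0_iff field_simps)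
qed

lemma accept_prob_eq_if_no_queries:
  assumes "makes_at_most R T 0"
  shows "accept_prob T f = accept_prob T g"
proof -
  have "run t f = run t g" if "t \<in> set_pmf T" for t
    using assms that unfolding makes_at_most_def by (cases t) auto
  then have "{t. run t f} \<inter> set_pmf T = {t. run t g} \<inter> set_pmf T"
    by blast
  then show ?thesis
    unfolding accept_prob_def by (metis measure_Int_set_pmf)
qed

section \<open>Query paths and separated levels\<close>

primrec query_path :: "dtree \<Rightarrow> (nat \<Rightarrow> nat) \<Rightarrow> nat list" where
  "query_path (Leaf b) f = []"
| "query_path (Query x c) f = x # query_path (c (f x)) f"

lemma run_query_path_cong:
  assumes "\<And>x. x \<in> set (query_path t f) \<Longrightarrow> f x = g x"
  shows "run t f = run t g \<and> query_path t f = query_path t g"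
  using assms by (induction t) auto

lemma length_query_path_le:
  assumes "queries_le R t q" "\<And>x. f x < R"
  shows "length (query_path t f) \<le> q"
  using assms(1)
proof (induction t arbitrary: q)
  case (Query x c)
  then show ?case
    using Query.IH[OF rangeI, of "f x" "q - 1"] assms(2)[of x] by fastforce
qed simp

lemma card_accepted_le_by_coupling:
  fixes f g :: "'s \<Rightarrow> nat \<Rightarrow> nat" and flip :: "nat list \<Rightarrow> 's \<Rightarrow> 's"
  assumes "finite S"
    and flip_in: "\<And>P c. c \<in> S \<Longrightarrow> flip P c \<in> S"
    and flip_inj: "\<And>P. inj (flip P)"
    and agree: "\<And>c x. c \<in> S \<Longrightarrow> \<not> bad (query_path t (f c)) \<Longrightarrow> x \<in> set (query_path t (f c))
                  \<Longrightarrow> g (flip (query_path t (f c)) c) x = f c x"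
  shows "card {c\<in>S. run t (f c)} \<le> card {c\<in>S. run t (g c)} + card {c\<in>S. bad (query_path t (f c))}"
proof -
  define A where "A = {c\<in>S. \<not> bad (query_path t (f c)) \<and> run t (f c)}"
  define \<psi> where "\<psi> c = flip (query_path t (f c)) c" for c
  have same_run: "run t (g (\<psi> c)) = run t (f c) \<and> query_path t (g (\<psi> c)) = query_path t (f c)"
    if "c \<in> A" for c
    using run_query_path_cong[of t "f c" "g (\<psi> c)"] agree[of c] that
    by (auto simp: A_def \<psi>_def)
  have "inj_on \<psi> A"
  proof
    fix c c' assume "c \<in> A" "c' \<in> A" "\<psi> c = \<psi> c'"
    with same_run[of c] same_run[of c'] show "c = c'"
      using flip_inj unfolding \<psi>_def by (metis injD)
  qed
  moreover have "\<psi> ` A \<subseteq> {c\<in>S. run t (g c)}"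
    using same_run flip_in by (auto simp: A_def \<psi>_def)
  ultimately have "card A \<le> card {c\<in>S. run t (g c)}"
    using card_inj_on_le assms(1) by fastforce
  moreover have "card {c\<in>S. run t (f c)} \<le> card (A \<union> {c\<in>S. bad (query_path t (f c))})"
    using assms(1) by (intro card_mono) (auto simp: A_def)
  moreover note card_Un_le[of A "{c\<in>S. bad (query_path t (f c))}"]
  ultimately show ?thesis by linarith
qed

definition separates_level :: "nat \<Rightarrow> nat \<Rightarrow> nat set \<Rightarrow> bool" where
  "separates_level b i Q \<longleftrightarrow>
     (\<exists>x\<in>Q. \<exists>y\<in>Q. x div b^(i+1) = y div b^(i+1) \<and> x div b^i \<noteq> y div b^i)"

lemma div_power_eq_mono:
  fixes x y b :: nat
  assumes "x div b^i = y div b^i" "i \<le> j"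
  shows "x div b^j = y div b^j"
proof -
  have "b^j = b^i * b^(j-i)"
    using assms(2) by (simp flip: power_add)
  then show ?thesis
    using assms(1) by (simp add: div_mult2_eq)
qed

lemma separates_level_pair:
  "separates_level b i {x, y} \<longleftrightarrow> x div b^(i+1) = y div b^(i+1) \<and> x div b^i \<noteq> y div b^i"
  by (auto simp: separates_level_def)

lemma card_levels_separating_pair_le_1:
  assumes "finite I"
  shows "card {i\<in>I. separates_level b i {x, y}} \<le> 1"
proof -
  have "\<not> (separates_level b i {x, y} \<and> separates_level b j {x, y})" if "i < j" for i j
    using div_power_eq_mono[of x b "i+1" y j] that by (auto simp: separates_level_pair)
  then have "i = j" if "separates_level b i {x, y}" "separates_level b j {x, y}" for i j
    using that by (metis linorder_neqE_nat)
  then show ?thesis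
    using assms by (auto simp: card_le_Suc0_iff_eq)
qed

lemma separates_level_mono: "Q \<subseteq> Q' \<Longrightarrow> separates_level b i Q \<Longrightarrow> separates_level b i Q'"
  unfolding separates_level_def by blast

text \<open>Blocks are intervals, so \<open>Max A\<close> lies in every block containing \<open>x\<close> and a point of \<open>A\<close>.\<close>

lemma separates_level_insert_max:
  assumes "finite A" "A \<noteq> {}" "\<forall>a\<in>A. a < x" "separates_level b i (insert x A)"
  shows "separates_level b i A \<or> separates_level b i {Max A, x}"
proof -
  have max: "Max A \<in> A" "Max A < x"
    using assms(1-3) by auto
  have between: "Max A div b^n = x div b^n" if "u \<in> A" "u div b^n = x div b^n" for u n
    using that max Max_ge[OF assms(1) that(1)] div_le_mono[of u "Max A" "b^n"]
      div_le_mono[of "Max A" x "b^n"] by simp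
  have "separates_level b i A \<or> separates_level b i {Max A, x}"
    if "u \<in> A" "separates_level b i {u, x}" for u
  proof -
    have u: "u div b^(i+1) = x div b^(i+1)" "u div b^i \<noteq> x div b^i"
      using that(2) unfolding separates_level_pair by blast+
    have "Max A div b^(i+1) = x div b^(i+1)"
      using between[OF that(1) u(1)] .
    then have "separates_level b i {u, Max A} \<or> separates_level b i {Max A, x}"
      using u unfolding separates_level_pair by auto
    then show ?thesis
      using that(1) max(1) separates_level_mono[of "{u, Max A}" A] by blast
  qed
  moreover have "separates_level b i A \<or> (\<exists>u\<in>A. separates_level b i {u, x})"
    using assms(4) unfolding separates_level_def by blast
  ultimately show ?thesis
    by blast
qed

lemma card_separated_levels_le:
  assumes "finite Q" "finite I"
  shows "card {i\<in>I. separates_level b i Q} \<le> card Q"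
  using assms(1)
proof (induction rule: finite_linorder_max_induct)
  case empty
  then show ?case by (simp add: separates_level_def)
next
  case (insert x A)
  show ?case
  proof (cases "A = {}")
    case True
    then show ?thesis by (simp add: separates_level_def)
  next
    case False
    have "card {i\<in>I. separates_level b i (insert x A)}
        \<le> card ({i\<in>I. separates_level b i A} \<union> {i\<in>I. separates_level b i {Max A, x}})"
      using separates_level_insert_max[OF insert.hyps(1) False insert.hyps(2)] assms(2)
      by (intro card_mono) auto
    also have "\<dots> \<le> card {i\<in>I. separates_level b i A} + card {i\<in>I. separates_level b i {Max A, x}}"
      by (rule card_Un_le)
    also have "\<dots> \<le> card A + 1"
      using insert.IH card_levels_separating_pair_le_1[OF assms(2)] by (rule add_mono)
    also have "\<dots> = card (insert x A)"
      using insert.hyps(1,2) by (auto simp: card_insert_if)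
    finally show ?thesis .
  qed
qed

lemma sum_card_separated_levels_le:
  assumes "finite I" "finite S" "\<And>c. c \<in> S \<Longrightarrow> length (P c) \<le> q"
  shows "(\<Sum>i\<in>I. card {c\<in>S. separates_level b i (set (P c))}) \<le> q * card S"
proof -
  have card_sum: "card {x\<in>A. R x} = (\<Sum>x\<in>A. of_bool (R x))" if "finite A" for A and R :: "_ \<Rightarrow> bool"
    using that by (simp add: Int_def)
  have "(\<Sum>i\<in>I. card {c\<in>S. separates_level b i (set (P c))})
      = (\<Sum>i\<in>I. \<Sum>c\<in>S. of_bool (separates_level b i (set (P c))))"
    using assms(2) by (intro sum.cong refl card_sum)
  also have "\<dots> = (\<Sum>c\<in>S. \<Sum>i\<in>I. of_bool (separates_level b i (set (P c))))"
    by (rule sum.swap)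
  also have "\<dots> = (\<Sum>c\<in>S. card {i\<in>I. separates_level b i (set (P c))})"
    using assms(1) by (intro sum.cong refl card_sum[symmetric])
  also have "\<dots> \<le> (\<Sum>c\<in>S. q)"
  proof (rule sum_mono)
    fix c assume "c \<in> S"
    have "card {i\<in>I. separates_level b i (set (P c))} \<le> card (set (P c))"
      using card_separated_levels_le[OF _ assms(1)] by simp
    also have "\<dots> \<le> q"
      using card_length[of "P c"] assms(3)[OF \<open>c \<in> S\<close>] by linarith
    finally show "card {i\<in>I. separates_level b i (set (P c))} \<le> q" .
  qed
  finally show ?thesis
    by (simp add: mult.commute)
qed

section \<open>Discrete convexity\<close>

lemma convex_fin_if_supporting_lines:
  assumes "\<And>m. m \<in> D \<Longrightarrow> \<exists>s. \<forall>x\<in>D. h m + s * (real x - real m) \<le> h x"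
  shows "convex_fin D h"
  unfolding convex_fin_def
proof (intro allI impI, elim conjE)
  fix S lam m
  assume S: "finite S" "S \<subseteq> D" and lam: "\<forall>x\<in>S. 0 \<le> lam x" "sum lam S = 1"
    and m: "m \<in> D" "(\<Sum>x\<in>S. lam x * real x) = real m"
  obtain s where s: "\<And>x. x \<in> D \<Longrightarrow> h m + s * (real x - real m) \<le> h x"
    using assms[OF m(1)] by blast
  have "h m = (\<Sum>x\<in>S. lam x * (h m + s * (real x - real m)))"
    using lam(2) m(2) by (simp add: algebra_simps sum.distrib sum_subtractf
        flip: sum_distrib_left sum_distrib_right)
  also have "\<dots> \<le> (\<Sum>x\<in>S. lam x * h x)"
    using S lam(1) s by (intro sum_mono mult_left_mono) auto
  finally show "h m \<le> (\<Sum>x\<in>S. lam x * h x)" .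
qed

lemma increments_mono_if_midpoint_convex:
  fixes h :: "nat \<Rightarrow> 'a::linordered_idom"
  assumes "\<And>x. x + 2 < n \<Longrightarrow> 2 * h (x+1) \<le> h x + h (x+2)" "y \<le> y'" "y' + 1 < n"
  shows "h (y+1) - h y \<le> h (y'+1) - h y'"
  using assms(2,3)
proof (induction y' rule: dec_induct)
  case (step z)
  then show ?case
    using assms(1)[of z] by (simp add: algebra_simps)
qed simp

lemma supporting_line_if_midpoint_convex:
  fixes h :: "nat \<Rightarrow> real"
  assumes convex: "\<And>x. x + 2 < n \<Longrightarrow> 2 * h (x+1) \<le> h x + h (x+2)" and "m < n"
  shows "\<exists>s. \<forall>x<n. h m + s * (real x - real m) \<le> h x"
proof -
  define \<Delta> where "\<Delta> y = h (y+1) - h y" for y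
  have mono: "\<Delta> y \<le> \<Delta> y'" if "y \<le> y'" "y' + 1 < n" for y y'
    unfolding \<Delta>_def using increments_mono_if_midpoint_convex[OF convex that] .
  have telescope: "h b - h a = (\<Sum>y=a..<b. \<Delta> y)" if "a \<le> b" for a b
    using sum_Suc_diff'[OF that, of h] by (simp add: \<Delta>_def)
  define s where "s = (if m + 1 < n then \<Delta> m else if 1 \<le> m then \<Delta> (m-1) else 0)"
  have "h m + s * (real x - real m) \<le> h x" if "x < n" for x
  proof (cases x m rule: linorder_cases)
    case greater
    then have "(\<Sum>y=m..<x. s) \<le> (\<Sum>y=m..<x. \<Delta> y)"
      using mono that by (intro sum_mono) (auto simp: s_def)
    then show ?thesis
      using telescope[of m x] greater by (simp add: of_nat_diff algebra_simps)
  next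
    case less
    then have "(\<Sum>y=x..<m. \<Delta> y) \<le> (\<Sum>y=x..<m. s)"
      using mono[of _ m] mono[of _ "m-1"] \<open>m < n\<close> by (intro sum_mono) (auto simp: s_def)
    then show ?thesis
      using telescope[of x m] less by (simp add: of_nat_diff algebra_simps)
  qed simp
  then show ?thesis by blast
qed

lemma convex_fin_lessThan_if_midpoint_convex:
  fixes h :: "nat \<Rightarrow> real"
  assumes "\<And>x. x + 2 < n \<Longrightarrow> 2 * h (x+1) \<le> h x + h (x+2)"
  shows "convex_fin {..<n} h"
proof (rule convex_fin_if_supporting_lines)
  fix m assume "m \<in> {..<n}"
  then show "\<exists>s. \<forall>x\<in>{..<n}. h m + s * (real x - real m) \<le> h x"
    using supporting_line_if_midpoint_convex[of n h m, OF assms] by (metis lessThan_iff)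
qed

definition chord_gap :: "(nat \<Rightarrow> 'a::comm_ring_1) \<Rightarrow> nat \<Rightarrow> nat \<Rightarrow> nat \<Rightarrow> 'a" where
  "chord_gap h l m r = of_nat (r - l) * h m - of_nat (r - m) * h l - of_nat (m - l) * h r"

lemma chord_gap_nonpos_if_convex_fin:
  assumes "convex_fin D h" "l \<in> D" "m \<in> D" "r \<in> D" "l < m" "m < r"
  shows "chord_gap h l m r \<le> 0"
proof -
  define d where "d = real (r - l)"
  define lam where "lam x = (if x = l then real (r - m) else real (m - l)) / d" for x
  have "l \<noteq> r" "0 < d" and d: "real (r - m) + real (m - l) = d"
    using assms(5,6) by (auto simp: d_def)
  have "sum lam {l, r} = (real (r - m) + real (m - l)) / d"
    using \<open>l \<noteq> r\<close> by (simp add: lam_def add_divide_distrib)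
  also have "\<dots> = 1"
    using d \<open>0 < d\<close> by simp
  finally have sum_lam: "sum lam {l, r} = 1" .
  have "(\<Sum>x\<in>{l, r}. lam x * real x) = (real (r - m) * real l + real (m - l) * real r) / d"
    using \<open>l \<noteq> r\<close> by (simp add: lam_def add_divide_distrib)
  also have "real (r - m) * real l + real (m - l) * real r = real m * d"
    using assms(5,6) by (simp add: d_def of_nat_diff algebra_simps)
  finally have "(\<Sum>x\<in>{l, r}. lam x * real x) = real m"
    using \<open>0 < d\<close> by simp
  moreover have "\<forall>x\<in>{l, r}. 0 \<le> lam x"
    using \<open>0 < d\<close> by (simp add: lam_def)
  ultimately have "h m \<le> (\<Sum>x\<in>{l, r}. lam x * h x)"
    using assms(1-4) sum_lam unfolding convex_fin_def
    by (elim allE[of _ "{l, r}"] allE[of _ lam] allE[of _ m]) auto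
  also have "(\<Sum>x\<in>{l, r}. lam x * h x) = (real (r - m) * h l + real (m - l) * h r) / d"
    using \<open>l \<noteq> r\<close> by (simp add: lam_def add_divide_distrib)
  finally have "d * h m \<le> real (r - m) * h l + real (m - l) * h r"
    using \<open>0 < d\<close> by (simp add: pos_le_divide_eq mult.commute)
  then show ?thesis
    by (simp add: chord_gap_def d_def)
qed

lemma chord_gap_add: "chord_gap (\<lambda>x. h x + g x) l m r = chord_gap h l m r + chord_gap g l m r"
  by (simp add: chord_gap_def algebra_simps)

lemma chord_gap_mult: "chord_gap (\<lambda>x. a * h x) l m r = a * chord_gap h l m r"
  by (simp add: chord_gap_def algebra_simps)

lemma chord_gap_sum:
  "chord_gap (\<lambda>x. \<Sum>j\<in>J. f j x) l m r = (\<Sum>j\<in>J. chord_gap (f j) l m r)"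
  by (simp add: chord_gap_def sum_distrib_left sum_subtractf)

lemma chord_gap_add_const:
  "l \<le> m \<Longrightarrow> m \<le> r \<Longrightarrow> chord_gap (\<lambda>x. a + h x) l m r = chord_gap h l m r"
  by (simp add: chord_gap_def of_nat_diff algebra_simps)

lemma chord_gap_ge_if_increments_bounded:
  fixes h :: "nat \<Rightarrow> 'a::linordered_idom"
  assumes "l \<le> m" "m \<le> r"
    and increments: "\<And>y. l \<le> y \<Longrightarrow> y < r \<Longrightarrow> lo \<le> h (Suc y) - h y \<and> h (Suc y) - h y \<le> hi"
  shows "- ((hi - lo) * (of_nat (m - l) * of_nat (r - m))) \<le> chord_gap h l m r"
proof -
  have telescope: "h b - h a = (\<Sum>y=a..<b. h (Suc y) - h y)" if "a \<le> b" for a b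
    using sum_Suc_diff'[OF that, of h] by simp
  have "of_nat (m - l) * lo \<le> h m - h l"
    using telescope[of l m] increments assms(1,2) sum_bounded_below[of "{l..<m}" lo "\<lambda>y. h (Suc y) - h y"]
    by auto
  moreover have "h r - h m \<le> of_nat (r - m) * hi"
    using telescope[of m r] increments assms(1,2) sum_bounded_above[of "{m..<r}" "\<lambda>y. h (Suc y) - h y" hi]
    by auto
  ultimately have "of_nat (r - m) * (of_nat (m - l) * lo) - of_nat (m - l) * (of_nat (r - m) * hi)
      \<le> of_nat (r - m) * (h m - h l) - of_nat (m - l) * (h r - h m)"
    by (intro diff_mono mult_left_mono) auto
  also have "\<dots> = chord_gap h l m r"
    using assms(1,2) by (simp add: chord_gap_def of_nat_diff algebra_simps)
  finally show ?thesis
    by (simp add: algebra_simps)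
qed

lemma far_from_convex_if_disjoint_violations:
  fixes f :: "nat \<Rightarrow> real" and eps :: real and l m r :: "'i \<Rightarrow> nat" and index :: "nat \<Rightarrow> 'i"
  assumes "finite D"
    and triples: "\<And>\<iota>. \<iota> \<in> I \<Longrightarrow> l \<iota> \<in> D \<and> m \<iota> \<in> D \<and> r \<iota> \<in> D \<and> l \<iota> < m \<iota> \<and> m \<iota> < r \<iota>"
    and violated: "\<And>\<iota>. \<iota> \<in> I \<Longrightarrow> 0 < chord_gap f (l \<iota>) (m \<iota>) (r \<iota>)"
    and index: "\<And>\<iota>. \<iota> \<in> I \<Longrightarrow> index (l \<iota>) = \<iota> \<and> index (m \<iota>) = \<iota> \<and> index (r \<iota>) = \<iota>"
    and "eps * card D \<le> card I"
  shows "far_from_convex eps D f"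
  unfolding far_from_convex_def
proof (intro allI impI)
  fix h assume "convex_fin D h"
  have "\<exists>x\<in>{l \<iota>, m \<iota>, r \<iota>}. f x \<noteq> h x" if "\<iota> \<in> I" for \<iota>
  proof (rule ccontr)
    assume "\<not> (\<exists>x\<in>{l \<iota>, m \<iota>, r \<iota>}. f x \<noteq> h x)"
    then have "chord_gap f (l \<iota>) (m \<iota>) (r \<iota>) = chord_gap h (l \<iota>) (m \<iota>) (r \<iota>)"
      by (simp add: chord_gap_def)
    moreover have "chord_gap h (l \<iota>) (m \<iota>) (r \<iota>) \<le> 0"
      using chord_gap_nonpos_if_convex_fin[OF \<open>convex_fin D h\<close>] triples[OF that] by blast
    ultimately show False
      using violated[OF that] by simp
  qed
  then obtain pick where
    pick: "\<And>\<iota>. \<iota> \<in> I \<Longrightarrow> pick \<iota> \<in> {l \<iota>, m \<iota>, r \<iota>} \<and> f (pick \<iota>) \<noteq> h (pick \<iota>)"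
    by metis
  have "inj_on pick I"
  proof (rule inj_on_inverseI[where g = index])
    fix \<iota> assume "\<iota> \<in> I"
    then show "index (pick \<iota>) = \<iota>"
      using pick[of \<iota>] index[of \<iota>] by auto
  qed
  moreover have "pick ` I \<subseteq> {x\<in>D. f x \<noteq> h x}"
  proof
    fix x assume "x \<in> pick ` I"
    then obtain \<iota> where "\<iota> \<in> I" "x = pick \<iota>"
      by blast
    then show "x \<in> {x\<in>D. f x \<noteq> h x}"
      using pick[of \<iota>] triples[of \<iota>] by auto
  qed
  ultimately have "card I \<le> card {x\<in>D. f x \<noteq> h x}"
    using card_inj_on_le assms(1) by fastforce
  then show "eps * card D \<le> card {x\<in>D. f x \<noteq> h x}"
    using assms(5) by linarith
qed

lemma spike_far_from_convex: "far_from_convex (1/9) {..<3} (\<lambda>x. of_bool (x = 1))"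
  unfolding far_from_convex_def
proof (intro allI impI)
  fix h assume "convex_fin {..<3} h"
  then have "chord_gap h 0 1 2 \<le> 0"
    by (rule chord_gap_nonpos_if_convex_fin) auto
  moreover have "chord_gap h 0 1 2 = 2" if "\<forall>x<3. of_bool (x = 1) = h x"
    using that[rule_format, of 0] that[rule_format, of 1] that[rule_format, of 2]
    by (simp add: chord_gap_def)
  ultimately have "{x\<in>{..<3::nat}. of_bool (x = 1) \<noteq> h x} \<noteq> {}"
    by fastforce
  moreover have "finite {x\<in>{..<3::nat}. of_bool (x = 1) \<noteq> h x}"
    by simp
  ultimately have "0 < card {x\<in>{..<3::nat}. of_bool (x = 1) \<noteq> h x}"
    using card_gt_0_iff by blast
  then show "1/9 * real (card {..<3::nat}) \<le> real (card {x\<in>{..<3::nat}. of_bool (x = 1) \<noteq> h x})"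
    by simp
qed

section \<open>The hard instances\<close>

text \<open>On a block \<open>[0, 3L)\<close>, \<open>vee L\<close> has slope \<open>-2\<close> on the first third and slope \<open>1\<close>
  afterwards and vanishes at both ends; its slope drops by \<open>3\<close> at block boundaries, which
  \<open>3 * ramp (3*L)\<close> compensates.\<close>

definition vee :: "nat \<Rightarrow> nat \<Rightarrow> int" where
  "vee L p = (if p < L then - 2 * int p else int p - 3 * int L)"

definition ramp :: "nat \<Rightarrow> nat \<Rightarrow> int" where
  "ramp M x = (\<Sum>y<x. int (y div M))"

definition wave :: "nat \<Rightarrow> (nat \<Rightarrow> bool) \<Rightarrow> nat \<Rightarrow> int" where
  "wave L B x = of_bool (B (x div (3*L))) * vee L (x mod (3*L)) + 3 * ramp (3*L) x"

lemma ramp_Suc: "ramp M (Suc x) = ramp M x + int (x div M)"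
  by (simp add: ramp_def)

lemma wave_midpoint_convex:
  assumes "2 \<le> L"
  shows "2 * wave L B (Suc x) \<le> wave L B x + wave L B (Suc (Suc x))"
  using assms
  by (auto simp: wave_def vee_def ramp_Suc div_Suc mod_Suc split: if_splits)

lemma wave_increment_within_block:
  assumes "Suc (x mod (3*L)) < 3*L"
  shows "wave L B (Suc x) - wave L B x
    = of_bool (B (x div (3*L))) * (if x mod (3*L) < L then - 2 else 1) + 3 * int (x div (3*L))"
  using assms
  by (auto simp: wave_def vee_def ramp_Suc div_Suc mod_Suc)

lemma wave_increment_bounds:
  assumes "1 \<le> L"
  shows "- 2 + 3 * int (x div (3*L)) \<le> wave L B (Suc x) - wave L B x
    \<and> wave L B (Suc x) - wave L B x \<le> 1 + 3 * int (x div (3*L))"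
proof (cases "Suc (x mod (3*L)) < 3*L")
  case True
  then show ?thesis
    using wave_increment_within_block[OF True, of B] by auto
next
  case False
  moreover have "x mod (3*L) < 3*L"
    using assms by simp
  ultimately have last: "Suc (x mod (3*L)) = 3*L"
    by linarith
  then have "Suc x mod (3*L) = 0" "Suc x div (3*L) = Suc (x div (3*L))"
    by (simp_all add: mod_Suc div_Suc)
  moreover have "vee L (x mod (3*L)) = - 1"
    using last assms by (simp add: vee_def)
  ultimately show ?thesis
    by (simp add: wave_def ramp_Suc vee_def)
qed

lemma mod_three_times_less_iff:
  fixes x L :: nat
  assumes "0 < L"
  shows "x mod (3*L) < L \<longleftrightarrow> x div L mod 3 = 0"
proof -
  have split: "x mod (3*L) = L * (x div L mod 3) + x mod L"
    using mod_mult2_eq[of x L 3] by (simp add: mult.commute)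
  show ?thesis
  proof (cases "x div L mod 3 = 0")
    case True
    then show ?thesis
      using split assms by simp
  next
    case False
    then have "L \<le> L * (x div L mod 3)"
      using mult_le_mono2[of 1 "x div L mod 3" L] by simp
    then have "\<not> x mod (3*L) < L"
      using split by linarith
    with False show ?thesis
      by simp
  qed
qed

lemma wave_increment_eq_if_same_subblock:
  assumes "0 < L" "x div L = y div L" "Suc x div L = x div L" "Suc y div L = y div L"
  shows "wave L B (Suc x) - wave L B x = wave L B (Suc y) - wave L B y"
proof -
  have "Suc (z mod (3*L)) < 3*L" if "Suc z div L = z div L" for z
  proof -
    have "Suc z div (3*L) = z div (3*L)"
      using that by (simp add: div_mult2_eq mult.commute)
    then have "Suc (z mod (3*L)) \<noteq> 3*L"
      by (auto simp: div_Suc mod_Suc)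
    moreover have "z mod (3*L) < 3*L"
      using assms(1) by simp
    ultimately show ?thesis
      by linarith
  qed
  moreover have "x div (3*L) = y div (3*L)"
    using assms(2) by (simp add: div_mult2_eq mult.commute)
  ultimately show ?thesis
    using assms wave_increment_within_block[of x L B] wave_increment_within_block[of y L B]
      mod_three_times_less_iff[OF assms(1), of x] mod_three_times_less_iff[OF assms(1), of y]
    by simp
qed

lemma div_eq_if_between:
  fixes l y r M :: nat
  assumes "l \<le> y" "y \<le> r" "l div M = r div M"
  shows "y div M = l div M"
  using assms div_le_mono[of l y M] div_le_mono[of y r M] by simp

text \<open>Levels start at \<open>1\<close>, so \<open>i = 0\<close> gives the yes-instances and \<open>1 \<le> i < k\<close> the
  no-instances.\<close>

definition level_bit :: "(nat \<times> nat) set \<Rightarrow> nat \<Rightarrow> nat \<Rightarrow> nat \<Rightarrow> bool" where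
  "level_bit c i j x \<longleftrightarrow> ((j, x div 3^(j+1)) \<in> c) \<noteq> (j = i \<and> 3^j \<le> x mod 3^(j+1))"

definition tooth :: "(nat \<times> nat) set \<Rightarrow> nat \<Rightarrow> nat \<Rightarrow> nat \<Rightarrow> int" where
  "tooth c i j x = of_bool (level_bit c i j x) * vee (3^j) (x mod 3^(j+1))"

definition level_term :: "(nat \<times> nat) set \<Rightarrow> nat \<Rightarrow> nat \<Rightarrow> nat \<Rightarrow> int" where
  "level_term c i j x = 81^j * (tooth c i j x + 3 * ramp (3^(j+1)) x)"

definition offset :: "nat \<Rightarrow> int" where
  "offset k = (\<Sum>j\<in>{1..<k}. 2 * 81^j * 3^j)"

definition hard_int :: "nat \<Rightarrow> (nat \<times> nat) set \<Rightarrow> nat \<Rightarrow> nat \<Rightarrow> int" where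
  "hard_int k c i x = offset k + (\<Sum>j\<in>{1..<k}. level_term c i j x)"

definition hard_input :: "nat \<Rightarrow> (nat \<times> nat) set \<Rightarrow> nat \<Rightarrow> nat \<Rightarrow> nat" where
  "hard_input k c i x = (if x < 3^k then nat (hard_int k c i x) else 0)"

lemma level_term_eq_wave:
  assumes "j \<noteq> i"
  shows "level_term c i j x = 81^j * wave (3^j) (\<lambda>C. (j, C) \<in> c) x"
  using assms by (simp add: level_term_def tooth_def level_bit_def wave_def)

lemma hard_int_midpoint_convex:
  "2 * hard_int k c 0 (Suc x) \<le> hard_int k c 0 x + hard_int k c 0 (Suc (Suc x))"
proof -
  have "2 * level_term c 0 j (Suc x) \<le> level_term c 0 j x + level_term c 0 j (Suc (Suc x))"
    if "j \<in> {1..<k}" for j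
  proof -
    have "(3::nat)^1 \<le> 3^j"
      using that by (intro power_increasing) auto
    then show ?thesis
      using that wave_midpoint_convex[of "3^j" "\<lambda>C. (j, C) \<in> c" x]
      by (simp add: level_term_eq_wave flip: distrib_left)
  qed
  then have "(\<Sum>j\<in>{1..<k}. 2 * level_term c 0 j (Suc x))
      \<le> (\<Sum>j\<in>{1..<k}. level_term c 0 j x + level_term c 0 j (Suc (Suc x)))"
    by (rule sum_mono)
  then show ?thesis
    unfolding hard_int_def by (simp add: sum.distrib sum_distrib_left)
qed

lemma vee_bounds: "p < 3 * L \<Longrightarrow> - 2 * int L \<le> vee L p \<and> vee L p \<le> 0"
  by (auto simp: vee_def)

lemma ramp_bounds: "0 \<le> ramp M x \<and> ramp M x \<le> int x * int x"
proof -
  have "ramp M x \<le> (\<Sum>y<x. int x)"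
    unfolding ramp_def by (intro sum_mono) (meson div_le_dividend le_trans lessThan_iff less_imp_le of_nat_le_iff)
  then show ?thesis
    by (simp add: ramp_def sum_nonneg)
qed

lemma level_term_bounds:
  assumes "x < 3^k"
  shows "- 2 * 81^j * 3^j \<le> level_term c i j x \<and> level_term c i j x \<le> 3 * 81^j * 9^k"
proof -
  have "x mod 3^(j+1) < 3 * 3^j"
    by simp
  then have tooth: "- 2 * 3^j \<le> tooth c i j x" "tooth c i j x \<le> 0"
    using vee_bounds[of "x mod 3^(j+1)" "3^j"] by (auto simp: tooth_def)
  have "int x * int x \<le> 3^k * 3^k"
    using assms by (intro mult_mono) auto
  then have "ramp (3^(j+1)) x \<le> 9^k"
    using ramp_bounds[of "3^(j+1)" x] by (simp add: power_mult_distrib[symmetric])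
  define E where "E = tooth c i j x + 3 * ramp (3^(j+1)) x"
  have "- 2 * 3^j \<le> E" "E \<le> 3 * 9^k"
    using tooth ramp_bounds[of "3^(j+1)" x] \<open>ramp (3^(j+1)) x \<le> 9^k\<close> unfolding E_def by linarith+
  then have "81^j * (- 2 * 3^j) \<le> 81^j * E" "81^j * E \<le> 81^j * (3 * 9^k)"
    by (intro mult_left_mono; simp)+
  then show ?thesis
    by (simp add: level_term_def E_def algebra_simps)
qed

lemma hard_int_nonneg:
  assumes "x < 3^k"
  shows "0 \<le> hard_int k c i x"
proof -
  have "- offset k \<le> (\<Sum>j\<in>{1..<k}. level_term c i j x)"
    unfolding offset_def using level_term_bounds[OF assms]
    by (simp add: sum_negf[symmetric] sum_mono)
  then show ?thesis
    by (simp add: hard_int_def)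
qed

lemma hard_int_less:
  assumes "x < 3^k"
  shows "hard_int k c i x < 729^k"
proof -
  have "2 * 81^j * 3^j + level_term c i j x \<le> 5 * 81^j * 9^k" if "j \<in> {1..<k}" for j
  proof -
    have "(3::int)^j \<le> 3^k"
      using that by (intro power_increasing) auto
    also have "\<dots> \<le> 9^k"
      by (intro power_mono) auto
    finally have "2 * 81^j * 3^j \<le> 2 * 81^j * (9::int)^k"
      by simp
    then show ?thesis
      using level_term_bounds[OF assms, where c=c and i=i and j=j] by linarith
  qed
  then have "(\<Sum>j\<in>{1..<k}. 2 * 81^j * 3^j + level_term c i j x) \<le> (\<Sum>j\<in>{1..<k}. 5 * 81^j * 9^k)"
    by (rule sum_mono)
  then have "hard_int k c i x \<le> (\<Sum>j\<in>{1..<k}. 5 * 81^j * 9^k)"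
    unfolding hard_int_def offset_def by (simp add: sum.distrib)
  also have "\<dots> \<le> (\<Sum>j<k. 5 * 81^j * 9^k)"
    by (rule sum_mono2) auto
  also have "\<dots> = 5 * 9^k * (\<Sum>j<k. 81^j)"
    by (simp add: sum_distrib_left mult_ac)
  also have "\<dots> < 9^k * 81^k"
  proof -
    have "0 \<le> (\<Sum>j<k. (81::int)^j)"
      by (simp add: sum_nonneg)
    then have "5 * (\<Sum>j<k. 81^j) < (81::int)^k"
      using power_diff_1_eq[of "81::int" k] by simp
    then show ?thesis
      using mult_strict_left_mono[of _ _ "9^k :: int"] by (simp add: mult_ac)
  qed
  also have "\<dots> = 729^k"
    by (simp add: power_mult_distrib[symmetric])
  finally show ?thesis .
qed

lemma power_729_le: "1 \<le> k \<Longrightarrow> (729::nat)^k \<le> (9*k)^(3*k)"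
proof -
  assume "1 \<le> k"
  then have "(9::nat)^3 \<le> (9*k)^3"
    by (intro power_mono) auto
  then have "(729::nat)^k \<le> ((9*k)^3)^k"
    by (intro power_mono) auto
  then show ?thesis
    by (simp add: power_mult)
qed

lemma hard_input_in_fun_class:
  assumes "1 \<le> k"
  shows "hard_input k c i \<in> fun_class (3^k) ((9*k)^(3*k))"
proof -
  have "nat (hard_int k c i x) < (9*k)^(3*k)" if "x < 3^k" for x
  proof -
    have "nat (hard_int k c i x) < 729^k"
      using hard_int_less[OF that, of c i] by (simp add: nat_less_iff)
    then show ?thesis
      using power_729_le[OF assms] by linarith
  qed
  moreover have "0 < (9*k)^(3*k)"
    using assms by simp
  ultimately show ?thesis
    by (simp add: fun_class_def hard_input_def)
qed

lemma real_hard_input: "x < 3^k \<Longrightarrow> real (hard_input k c i x) = of_int (hard_int k c i x)"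
  using hard_int_nonneg[of x k c i] by (simp add: hard_input_def)

lemma convex_hard_input_yes: "convex_fin {..<3^k} (\<lambda>x. real (hard_input k c 0 x))"
proof (rule convex_fin_lessThan_if_midpoint_convex)
  fix x :: nat assume "x + 2 < 3^k"
  then show "2 * real (hard_input k c 0 (x+1)) \<le> real (hard_input k c 0 x) + real (hard_input k c 0 (x+2))"
    using hard_int_midpoint_convex[of k c x] by (simp add: real_hard_input flip: of_int_le_iff)
qed

section \<open>Farness of the no-instances\<close>

lemma chord_gap_level_term_above:
  assumes "i < j" "l \<le> m" "m \<le> r" "l div 3^(i+1) = r div 3^(i+1)"
  shows "0 \<le> chord_gap (level_term c i j) l m r"
proof -
  define B where "B = (\<lambda>C. (j, C) \<in> c)"
  define d where "d = level_term c i j (Suc l) - level_term c i j l"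
  have subblock: "y div 3^j = l div 3^j \<and> Suc y div 3^j = y div 3^j" if "l \<le> y" "y < r" for y
  proof -
    have "y div 3^(i+1) = l div 3^(i+1)" "Suc y div 3^(i+1) = l div 3^(i+1)"
      using div_eq_if_between[of l y r "3^(i+1)"] div_eq_if_between[of l "Suc y" r "3^(i+1)"] assms(4) that
      by (simp_all only: Suc_le_eq less_imp_le)
    moreover have "i + 1 \<le> j"
      using assms(1) by simp
    ultimately have "y div 3^j = l div 3^j" "Suc y div 3^j = l div 3^j"
      using div_power_eq_mono[of y 3 "i+1" l j] div_power_eq_mono[of "Suc y" 3 "i+1" l j] by auto
    then show ?thesis
      by simp
  qed
  have "level_term c i j (Suc y) - level_term c i j y = d" if "l \<le> y" "y < r" for y
  proof -
    have "l < r"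
      using that by simp
    then have "Suc l div 3^j = l div 3^j"
      using subblock[of l] by blast
    then have "wave (3^j) B (Suc y) - wave (3^j) B y = wave (3^j) B (Suc l) - wave (3^j) B l"
      using subblock[OF that] by (intro wave_increment_eq_if_same_subblock) simp_all
    then show ?thesis
      using assms(1) by (simp add: d_def level_term_eq_wave B_def flip: right_diff_distrib)
  qed
  then show ?thesis
    using chord_gap_ge_if_increments_bounded[where h = "level_term c i j" and lo = d and hi = d] assms(2,3)
    by simp
qed

lemma chord_gap_level_term_at_twist:
  assumes "l \<le> m" "m \<le> r" "l div 3^(i+1) = r div 3^(i+1)"
  shows "81^i * chord_gap (tooth c i i) l m r \<le> chord_gap (level_term c i i) l m r"
proof -
  have "ramp (3^(i+1)) (Suc y) - ramp (3^(i+1)) y = int (l div 3^(i+1))" if "l \<le> y" "y < r" for y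
    using div_eq_if_between[of l y r] assms(3) that by (simp add: ramp_Suc)
  then have "0 \<le> chord_gap (ramp (3^(i+1))) l m r"
    using chord_gap_ge_if_increments_bounded[where h = "ramp (3^(i+1))" and lo = "int (l div 3^(i+1))"
        and hi = "int (l div 3^(i+1))"] assms(1,2)
    by simp
  moreover have "level_term c i i = (\<lambda>x. 81^i * (tooth c i i x + 3 * ramp (3^(i+1)) x))"
    by (simp add: level_term_def fun_eq_iff)
  ultimately show ?thesis
    by (simp add: chord_gap_mult chord_gap_add)
qed

lemma chord_gap_level_term_below:
  assumes "1 \<le> j" "j < i" "l \<le> m" "m \<le> r" "r \<le> l + 3^i"
  shows "- (81^j * (3 + 3^(i-j)) * (int (m - l) * int (r - m))) \<le> chord_gap (level_term c i j) l m r"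
proof -
  define M where "M = (3::nat)^(j+1)"
  define Q where "Q = l div M"
  have "i = (j+1) + (i-j-1)"
    using assms(2) by simp
  then have M: "M = 3 * 3^j" "(3::nat)^i = M * 3^(i-j-1)"
    unfolding M_def by (simp, metis power_add)
  have pow: "3 * int (3^(i-j-1)) = 3^(i-j)"
    using assms(2) by (simp flip: power_Suc)
  have block: "Q \<le> y div M \<and> y div M \<le> Q + 3^(i-j-1)" if "l \<le> y" "y < r" for y
  proof -
    have "y div M \<le> (l + 3^(i-j-1) * M) div M"
      using that assms(5) M(2) by (intro div_le_mono) (simp add: mult.commute)
    then show ?thesis
      using that by (simp add: Q_def M_def div_le_mono)
  qed
  have "- 2 + 3 * int Q \<le> wave (3^j) B (Suc y) - wave (3^j) B y
      \<and> wave (3^j) B (Suc y) - wave (3^j) B y \<le> 1 + 3 * int Q + 3^(i-j)"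
    if "l \<le> y" "y < r" for y B
  proof -
    have "- 2 + 3 * int (y div M) \<le> wave (3^j) B (Suc y) - wave (3^j) B y
        \<and> wave (3^j) B (Suc y) - wave (3^j) B y \<le> 1 + 3 * int (y div M)"
      using wave_increment_bounds[where L = "3^j" and B = B and x = y] by (simp add: M(1))
    then show ?thesis
      using pow block[OF that] by linarith
  qed
  then have "81^j * (- 2 + 3 * int Q) \<le> level_term c i j (Suc y) - level_term c i j y
      \<and> level_term c i j (Suc y) - level_term c i j y \<le> 81^j * (1 + 3 * int Q + 3^(i-j))"
    if "l \<le> y" "y < r" for y
    using that assms(2) by (simp add: level_term_eq_wave mult_left_mono flip: right_diff_distrib)
  then have "- ((81^j * (1 + 3 * int Q + 3^(i-j)) - 81^j * (- 2 + 3 * int Q)) * (int (m - l) * int (r - m)))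
      \<le> chord_gap (level_term c i j) l m r"
    by (intro chord_gap_ge_if_increments_bounded[OF assms(3,4)]) auto
  moreover have "81^j * (1 + 3 * int Q + 3^(i-j)) - 81^j * (- 2 + 3 * int Q) = 81^j * (3 + 3^(i-j))"
    by (simp add: algebra_simps)
  ultimately show ?thesis
    by simp
qed

lemma lower_level_weights_le:
  "3 * (\<Sum>j\<in>{1..<i}. 81^j * (3 + 3^(i-j))) \<le> (81::int)^i"
proof -
  have "81^j * (3 + 3^(i-j)) \<le> 2 * 3^i * (27::int)^j" if "j \<in> {1..<i}" for j
  proof -
    have "(3::int) \<le> 3^(i-j)"
      using that power_increasing[of 1 "i-j" "3::int"] by force
    then have "81^j * (3 + 3^(i-j)) \<le> 81^j * (2 * (3::int)^(i-j))"
      by (intro mult_left_mono) auto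
    also have "\<dots> = 2 * (27^j * (3^j * 3^(i-j)))"
      by (simp add: power_mult_distrib[symmetric])
    also have "\<dots> = 2 * 3^i * 27^j"
      using that by (simp flip: power_add)
    finally show ?thesis .
  qed
  then have "(\<Sum>j\<in>{1..<i}. 81^j * (3 + 3^(i-j))) \<le> (\<Sum>j<i. 2 * 3^i * (27::int)^j)"
    by (intro order.trans[OF sum_mono sum_mono2]) auto
  also have "\<dots> = 2 * (3^i * (\<Sum>j<i. 27^j))"
    by (simp add: sum_distrib_left mult.assoc)
  finally have "(\<Sum>j\<in>{1..<i}. 81^j * (3 + 3^(i-j))) \<le> 2 * (3^i * (\<Sum>j<i. (27::int)^j))" .
  moreover have "26 * (\<Sum>j<i. (27::int)^j) \<le> 27^i"
    using power_diff_1_eq[of "27::int" i] by simp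
  then have "3^i * (26 * (\<Sum>j<i. (27::int)^j)) \<le> 3^i * 27^i"
    by (intro mult_left_mono) auto
  then have "26 * (3^i * (\<Sum>j<i. (27::int)^j)) \<le> 81^i"
    by (simp add: mult_ac flip: power_mult_distrib)
  moreover have "0 \<le> 3^i * (\<Sum>j<i. (27::int)^j)"
    by (simp add: sum_nonneg)
  ultimately show ?thesis
    by linarith
qed

lemma chord_gap_hard_int_ge:
  assumes "1 \<le> i" "i < k" "l \<le> m" "m \<le> r" "r \<le> l + 3^i" "l div 3^(i+1) = r div 3^(i+1)"
  shows "81^i * (3 * chord_gap (tooth c i i) l m r - int (m - l) * int (r - m))
    \<le> 3 * chord_gap (hard_int k c i) l m r"
proof -
  define P where "P = int (m - l) * int (r - m)"
  define E where "E = (\<Sum>j\<in>{1..<i}. (81::int)^j * (3 + 3^(i-j)))"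
  define g where "g j = chord_gap (level_term c i j) l m r" for j
  have "hard_int k c i = (\<lambda>x. offset k + (\<Sum>j\<in>{1..<k}. level_term c i j x))"
    by (simp add: hard_int_def fun_eq_iff)
  then have "chord_gap (hard_int k c i) l m r = (\<Sum>j\<in>{1..<k}. g j)"
    using assms(3,4) by (simp add: g_def chord_gap_add_const chord_gap_sum)
  also have "\<dots> = (\<Sum>j\<in>{1..<i}. g j) + g i + (\<Sum>j\<in>{Suc i..<k}. g j)"
    using assms(1,2) sum.atLeastLessThan_concat[of 1 i k g] by (simp add: sum.atLeast_Suc_lessThan)
  finally have gap: "chord_gap (hard_int k c i) l m r = (\<Sum>j\<in>{1..<i}. g j) + g i + (\<Sum>j\<in>{Suc i..<k}. g j)" .
  have "(\<Sum>j\<in>{1..<i}. - (81^j * (3 + 3^(i-j)) * P)) \<le> (\<Sum>j\<in>{1..<i}. g j)"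
    using chord_gap_level_term_below assms(3-5) by (auto simp: g_def P_def intro!: sum_mono)
  then have below: "- (E * P) \<le> (\<Sum>j\<in>{1..<i}. g j)"
    by (simp add: E_def sum_distrib_right sum_negf)
  have own: "81^i * chord_gap (tooth c i i) l m r \<le> g i"
    unfolding g_def using chord_gap_level_term_at_twist assms(3,4,6) .
  have above: "0 \<le> (\<Sum>j\<in>{Suc i..<k}. g j)"
    using chord_gap_level_term_above assms(3,4,6) by (auto simp: g_def intro!: sum_nonneg)
  have "3 * E * P \<le> 81^i * P"
    using lower_level_weights_le[of i] by (intro mult_right_mono) (auto simp: E_def P_def)
  then show ?thesis
    using gap below own above unfolding P_def[symmetric] by (simp add: algebra_simps)
qed

definition grid_point :: "nat \<Rightarrow> nat \<Rightarrow> nat \<Rightarrow> nat \<Rightarrow> nat" where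
  "grid_point i C a u = C * 3^(i+1) + a * 3^(i-1) + u"

lemma three_power_pred:
  assumes "1 \<le> i"
  shows "(3::nat)^i = 3 * 3^(i-1)" "(3::nat)^(i+1) = 9 * 3^(i-1)"
proof -
  show "(3::nat)^i = 3 * 3^(i-1)"
    using assms by (simp flip: power_Suc)
  then show "(3::nat)^(i+1) = 9 * 3^(i-1)"
    by simp
qed

lemma grid_point_eq: "1 \<le> i \<Longrightarrow> grid_point i C a u = 3^(i-1) * (9 * C + a) + u"
  using three_power_pred(2)[of i] by (simp add: grid_point_def algebra_simps)

lemma grid_point_div_mod:
  assumes "1 \<le> i" "u < 3^(i-1)" "a \<le> 8"
  shows "grid_point i C a u div 3^(i+1) = C" "grid_point i C a u mod 3^(i+1) = a * 3^(i-1) + u"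
    "grid_point i C a u mod 3^(i-1) = u"
proof -
  define T where "T = (3::nat)^(i-1)"
  have M: "(3::nat)^(i+1) = 9 * T"
    using three_power_pred(2)[OF assms(1)] by (simp add: T_def)
  have "a * T \<le> 8 * T"
    using assms(3) by simp
  then have small: "a * T + u < 9 * T"
    using assms(2) unfolding T_def[symmetric] by linarith
  have "0 < T"
    by (simp add: T_def)
  have "grid_point i C a u = (a * T + u) + C * (9 * T)"
    using grid_point_eq[OF assms(1)] unfolding T_def[symmetric] by (simp add: algebra_simps)
  with small \<open>0 < T\<close> show "grid_point i C a u div 3^(i+1) = C"
    "grid_point i C a u mod 3^(i+1) = a * 3^(i-1) + u"
    unfolding M T_def[symmetric] by simp_all
  have "grid_point i C a u = u + (9 * C + a) * T"
    using grid_point_eq[OF assms(1)] unfolding T_def[symmetric] by (simp add: algebra_simps)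
  with assms(2) show "grid_point i C a u mod 3^(i-1) = u"
    unfolding T_def[symmetric] by simp
qed

lemma grid_point_less:
  assumes "1 \<le> i" "i < k" "C < 3^(k-i-1)" "u < 3^(i-1)" "a \<le> 8"
  shows "grid_point i C a u < 3^k"
proof -
  have "grid_point i C a u div 3^(i+1) < C + 1"
    using grid_point_div_mod(1)[OF assms(1,4,5)] by simp
  then have "grid_point i C a u < (C + 1) * 3^(i+1)"
    by (simp only: div_less_iff_less_mult zero_less_power zero_less_numeral)
  also have "\<dots> \<le> 3^(k-i-1) * 3^(i+1)"
    using assms(3) by (intro mult_le_mono1) simp
  also have "\<dots> = 3^((k-i-1) + (i+1))"
    by (simp only: power_add)
  also have "\<dots> = 3^k"
    using assms(2) by simp
  finally show ?thesis .
qed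

lemma grid_point_diff: "a \<le> b \<Longrightarrow> grid_point i C b u - grid_point i C a u = (b - a) * 3^(i-1)"
  by (simp add: grid_point_def diff_mult_distrib)

lemma tooth_grid_point:
  assumes "1 \<le> i" "u < 3^(i-1)" "a \<le> 8"
  shows "tooth c i i (grid_point i C a u) = of_bool (((i, C) \<in> c) \<noteq> (3 \<le> a))
    * (if a < 3 then - 2 * int (a * 3^(i-1) + u) else int (a * 3^(i-1) + u) - 9 * 3^(i-1))"
proof -
  note pow = three_power_pred(1)[OF assms(1)]
  have upper: "3 * 3^(i-1) \<le> a * 3^(i-1) + u \<longleftrightarrow> 3 \<le> a"
  proof
    assume le: "3 * 3^(i-1) \<le> a * 3^(i-1) + u"
    show "3 \<le> a"
    proof (rule ccontr)
      assume "\<not> 3 \<le> a"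
      then have "a * 3^(i-1) \<le> 2 * (3::nat)^(i-1)"
        using mult_le_mono1[of a 2 "3^(i-1)"] by simp
      then show False
        using le assms(2) by linarith
    qed
  next
    assume "3 \<le> a"
    then have "3 * 3^(i-1) \<le> a * (3::nat)^(i-1)"
      by (rule mult_le_mono1)
    then show "3 * 3^(i-1) \<le> a * 3^(i-1) + u"
      by linarith
  qed
  have "level_bit c i i (grid_point i C a u) \<longleftrightarrow> ((i, C) \<in> c) \<noteq> (3 \<le> a)"
    using grid_point_div_mod(1,2)[OF assms] upper pow by (simp add: level_bit_def)
  moreover have "vee (3^i) (grid_point i C a u mod 3^(i+1))
      = (if a < 3 then - 2 * int (a * 3^(i-1) + u) else int (a * 3^(i-1) + u) - 9 * 3^(i-1))"
    using grid_point_div_mod(2)[OF assms] upper pow by (auto simp: vee_def)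
  ultimately show ?thesis
    by (simp add: tooth_def)
qed

text \<open>At the corner \<open>3 * 3^(i-1)\<close> of a level-\<open>i\<close> block the twisted tooth jumps, upwards
  if the bit of the block is set and downwards otherwise; each triple straddles that jump.\<close>

lemma chord_gap_tooth_grid_triple:
  assumes "1 \<le> i" "u < 3^(i-1)"
    and offsets: "(a, b, d) = (if (i, C) \<in> c then (2, 3, 4) else (0, 1, 3))"
  defines "l \<equiv> grid_point i C a u" and "m \<equiv> grid_point i C b u" and "r \<equiv> grid_point i C d u"
  shows "int (m - l) * int (r - m) < 3 * chord_gap (tooth c i i) l m r"
proof -
  define T where "T = (3::nat)^(i-1)"
  have "0 < T"
    by (simp add: T_def)
  have "a \<le> b" "b \<le> d" "d \<le> 8"
    using offsets by (auto split: if_splits)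
  then have diffs: "m - l = (b - a) * T" "r - m = (d - b) * T" "r - l = (d - a) * T"
    using grid_point_diff[of _ _ i C u] by (simp_all add: l_def m_def r_def T_def)
  have tooth: "tooth c i i (grid_point i C e u) = of_bool (((i, C) \<in> c) \<noteq> (3 \<le> e))
      * (if e < 3 then - 2 * int (e * T + u) else int (e * T + u) - 9 * int T)" if "e \<le> 8" for e
    using tooth_grid_point[OF assms(1,2) that] by (simp add: T_def)
  show ?thesis
  proof (cases "(i, C) \<in> c")
    case True
    then have "a = 2" "b = 3" "d = 4"
      using offsets by simp_all
    then have "3 * chord_gap (tooth c i i) l m r - int (m - l) * int (r - m) = int T * (11 * int T + 6 * int u)"
      using True diffs tooth by (simp add: chord_gap_def l_def m_def r_def algebra_simps)
    then show ?thesis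
      using \<open>0 < T\<close> by (smt (verit) mult_pos_pos of_nat_0_le_iff of_nat_0_less_iff)
  next
    case False
    then have "a = 0" "b = 1" "d = 3"
      using offsets by simp_all
    then have "3 * chord_gap (tooth c i i) l m r - int (m - l) * int (r - m) = int T * (16 * int T - 3 * int u)"
      using False diffs tooth by (simp add: chord_gap_def l_def m_def r_def algebra_simps)
    moreover have "u < T"
      using assms(2) by (simp add: T_def)
    ultimately show ?thesis
      using \<open>0 < T\<close> by (smt (verit) mult_pos_pos of_nat_0_less_iff of_nat_less_iff)
  qed
qed

lemma chord_gap_hard_int_grid_triple_pos:
  assumes "1 \<le> i" "i < k" "u < 3^(i-1)"
    and offsets: "(a, b, d) = (if (i, C) \<in> c then (2, 3, 4) else (0, 1, 3))"
  defines "l \<equiv> grid_point i C a u" and "m \<equiv> grid_point i C b u" and "r \<equiv> grid_point i C d u"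
  shows "0 < chord_gap (hard_int k c i) l m r"
proof -
  have "a \<le> b" "b \<le> d" "d \<le> a + 3" "d \<le> 8"
    using offsets by (auto split: if_splits)
  then have "a * 3^(i-1) \<le> b * 3^(i-1)" "b * 3^(i-1) \<le> d * 3^(i-1)"
    "d * 3^(i-1) \<le> a * 3^(i-1) + 3 * (3::nat)^(i-1)"
    using mult_le_mono1[of d "a + 3" "3^(i-1)"] by (simp_all add: add_mult_distrib)
  then have "l \<le> m" "m \<le> r" "r \<le> l + 3^i"
    using three_power_pred(1)[OF assms(1)] by (simp_all add: l_def m_def r_def grid_point_def)
  moreover have "l div 3^(i+1) = r div 3^(i+1)"
    using grid_point_div_mod(1)[OF assms(1,3)] \<open>d \<le> 8\<close> \<open>a \<le> b\<close> \<open>b \<le> d\<close> by (simp add: l_def r_def)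
  ultimately have "81^i * (3 * chord_gap (tooth c i i) l m r - int (m - l) * int (r - m))
      \<le> 3 * chord_gap (hard_int k c i) l m r"
    by (intro chord_gap_hard_int_ge[OF assms(1,2)])
  moreover have "0 < 3 * chord_gap (tooth c i i) l m r - int (m - l) * int (r - m)"
    using chord_gap_tooth_grid_triple[OF assms(1,3) offsets] by (simp add: l_def m_def r_def)
  ultimately show ?thesis
    by (smt (verit) zero_less_power mult_pos_pos)
qed

lemma chord_gap_hard_input:
  assumes "l < 3^k" "m < 3^k" "r < 3^k"
  shows "chord_gap (\<lambda>x. real (hard_input k c i x)) l m r = of_int (chord_gap (hard_int k c i) l m r)"
  using assms by (simp add: chord_gap_def real_hard_input)

lemma far_from_convex_hard_input:
  assumes "1 \<le> i" "i < k"
  shows "far_from_convex (1/9) {..<3^k} (\<lambda>x. real (hard_input k c i x))"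
proof -
  define I where "I = {..<(3::nat)^(k-i-1)} \<times> {..<(3::nat)^(i-1)}"
  define l where "l = (\<lambda>(C, u). grid_point i C (if (i, C) \<in> c then 2 else 0) u)"
  define m where "m = (\<lambda>(C, u). grid_point i C (if (i, C) \<in> c then 3 else 1) u)"
  define r where "r = (\<lambda>(C, u). grid_point i C (if (i, C) \<in> c then 4 else 3) u)"
  have offsets: "(if (i, C) \<in> c then 2 else 0, if (i, C) \<in> c then 3 else 1, if (i, C) \<in> c then 4 else 3)
      = (if (i, C) \<in> c then (2, 3, 4) else (0::nat, 1::nat, 3::nat))" for C
    by simp
  show ?thesis
  proof (rule far_from_convex_if_disjoint_violations[where I = I and l = l and m = m and r = r
        and index = "\<lambda>x. (x div 3^(i+1), x mod 3^(i-1))"])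
    fix \<iota> assume "\<iota> \<in> I"
    then obtain C u where \<iota>: "\<iota> = (C, u)" "C < 3^(k-i-1)" "u < 3^(i-1)"
      by (auto simp: I_def)
    have "l \<iota> < 3^k" "m \<iota> < 3^k" "r \<iota> < 3^k"
      using grid_point_less[OF assms \<iota>(2,3)] by (simp_all add: \<iota>(1) l_def m_def r_def)
    moreover have "l \<iota> < m \<iota>" "m \<iota> < r \<iota>"
      by (simp_all add: \<iota>(1) l_def m_def r_def grid_point_def)
    ultimately show "l \<iota> \<in> {..<3^k} \<and> m \<iota> \<in> {..<3^k} \<and> r \<iota> \<in> {..<3^k} \<and> l \<iota> < m \<iota> \<and> m \<iota> < r \<iota>"
      by simp
    have "0 < chord_gap (hard_int k c i) (l \<iota>) (m \<iota>) (r \<iota>)"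
      using chord_gap_hard_int_grid_triple_pos[OF assms \<iota>(3) offsets] by (simp add: \<iota>(1) l_def m_def r_def)
    with \<open>l \<iota> < 3^k\<close> \<open>m \<iota> < 3^k\<close> \<open>r \<iota> < 3^k\<close>
    show "0 < chord_gap (\<lambda>x. real (hard_input k c i x)) (l \<iota>) (m \<iota>) (r \<iota>)"
      by (simp add: chord_gap_hard_input)
    show "(l \<iota> div 3^(i+1), l \<iota> mod 3^(i-1)) = \<iota> \<and> (m \<iota> div 3^(i+1), m \<iota> mod 3^(i-1)) = \<iota>
        \<and> (r \<iota> div 3^(i+1), r \<iota> mod 3^(i-1)) = \<iota>"
      using grid_point_div_mod[OF assms(1) \<iota>(3)] by (simp add: \<iota>(1) l_def m_def r_def)
  next
    have "(k-i-1) + (i-1) = k - 2"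
      using assms by simp
    then have "card I = 3^(k-2)"
      by (simp add: I_def card_cartesian_product flip: power_add)
    moreover have "k = (k-2) + 2"
      using assms by simp
    then have "(3::nat)^k = 3^(k-2) * 3^2"
      by (metis power_add)
    ultimately show "1/9 * real (card {..<(3::nat)^k}) \<le> real (card I)"
      by simp
  qed simp
qed

section \<open>Indistinguishability\<close>

definition flip_set :: "nat \<Rightarrow> nat \<Rightarrow> nat list \<Rightarrow> (nat \<times> nat) set" where
  "flip_set k i P = {(i, x div 3^(i+1)) | x. x \<in> set P \<and> x < 3^k \<and> 3^i \<le> x mod 3^(i+1)}"

lemma flip_set_subset: "i \<in> {1..<k} \<Longrightarrow> flip_set k i P \<subseteq> {1..<k} \<times> {..<3^k}"
  by (auto simp: flip_set_def intro: le_less_trans[OF div_le_dividend])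

lemma upper_two_thirds_iff: "(3::nat)^i \<le> x mod 3^(i+1) \<longleftrightarrow> x div 3^i mod 3 \<noteq> 0"
  using mod_three_times_less_iff[of "3^i" x] by (auto simp: not_less[symmetric])

lemma hard_input_flip_set_eq:
  assumes "i \<in> {1..<k}" "\<not> separates_level 3 i (set P)" "x \<in> set P"
  shows "hard_input k (sym_diff c (flip_set k i P)) i x = hard_input k c 0 x"
proof (cases "x < 3^k")
  case True
  have flip: "(i, x div 3^(i+1)) \<in> flip_set k i P \<longleftrightarrow> 3^i \<le> x mod 3^(i+1)"
  proof
    assume "(i, x div 3^(i+1)) \<in> flip_set k i P"
    then obtain y where y: "y \<in> set P" "3^i \<le> y mod 3^(i+1)" "y div 3^(i+1) = x div 3^(i+1)"
      unfolding flip_set_def by auto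
    then have "y div 3^i = x div 3^i"
      using assms(2,3) unfolding separates_level_def by blast
    then show "3^i \<le> x mod 3^(i+1)"
      using y(2) upper_two_thirds_iff[of i x] upper_two_thirds_iff[of i y] by simp
  qed (use assms(3) True in \<open>auto simp: flip_set_def\<close>)
  have "level_bit (sym_diff c (flip_set k i P)) i j x = level_bit c 0 j x" if "j \<in> {1..<k}" for j
    using that flip assms(1) by (auto simp: level_bit_def flip_set_def)
  then have "hard_int k (sym_diff c (flip_set k i P)) i x = hard_int k c 0 x"
    by (simp add: hard_int_def level_term_def tooth_def)
  with True show ?thesis
    by (simp add: hard_input_def)
qed (simp add: hard_input_def)

lemma card_accepted_le_by_flipping_level:
  assumes "i \<in> {1..<k}"
  defines "S \<equiv> Pow ({1..<k} \<times> {..<(3::nat)^k})"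
  shows "card {c\<in>S. run t (hard_input k c 0)} \<le> card {c\<in>S. run t (hard_input k c i)}
    + card {c\<in>S. separates_level 3 i (set (query_path t (hard_input k c 0)))}"
proof (rule card_accepted_le_by_coupling[where flip = "\<lambda>P c. sym_diff c (flip_set k i P)"])
  show "finite S"
    by (simp add: S_def)
  show "sym_diff c (flip_set k i P) \<in> S" if "c \<in> S" for P c
    using that flip_set_subset[OF assms(1)] by (auto simp: S_def)
  show "inj (\<lambda>c. sym_diff c (flip_set k i P))" for P
    by (rule injI) blast
qed (use hard_input_flip_set_eq[OF assms(1)] in blast)

lemma decision_tree_advantage_le:
  assumes "1 \<le> k" "queries_le ((9*k)^(3*k)) t q"
  defines "S \<equiv> Pow ({1..<k} \<times> {..<(3::nat)^k})"
  shows "(\<Sum>i\<in>{1..<k}. \<Sum>c\<in>S. of_bool (run t (hard_input k c 0)) - of_bool (run t (hard_input k c i)))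
    \<le> real q * card S"
proof -
  have "hard_input k c 0 x < (9*k)^(3*k)" for c x
    using hard_input_in_fun_class[OF assms(1), of c 0] assms(1)
    by (cases "x < 3^k") (auto simp: fun_class_def)
  then have "length (query_path t (hard_input k c 0)) \<le> q" for c
    using length_query_path_le[OF assms(2)] by blast
  then have separated: "(\<Sum>i\<in>{1..<k}. card {c\<in>S. separates_level 3 i (set (query_path t (hard_input k c 0)))})
      \<le> q * card S"
    by (intro sum_card_separated_levels_le) (simp_all add: S_def)
  have "finite S"
    by (simp add: S_def)
  then have "(\<Sum>i\<in>{1..<k}. \<Sum>c\<in>S. of_bool (run t (hard_input k c 0)) - of_bool (run t (hard_input k c i)))
      = (\<Sum>i\<in>{1..<k}. real (card {c\<in>S. run t (hard_input k c 0)}) - card {c\<in>S. run t (hard_input k c i)})"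
    by (simp add: sum_subtractf Int_def)
  also have "\<dots> \<le> (\<Sum>i\<in>{1..<k}. real (card {c\<in>S. separates_level 3 i (set (query_path t (hard_input k c 0)))}))"
    using card_accepted_le_by_flipping_level unfolding S_def
    by (intro sum_mono) (simp add: algebra_simps flip: of_nat_add)
  also have "\<dots> \<le> real q * card S"
    using separated by (simp flip: of_nat_sum of_nat_mult)
  finally show ?thesis .
qed

lemma tester_query_lower_bound:
  assumes "2 \<le> k" "convexity_tester (1/9) (3^k) ((9*k)^(3*k)) T" "makes_at_most ((9*k)^(3*k)) T q"
  shows "real (k - 1) / 3 \<le> q"
proof -
  define S where "S = Pow ({1..<k} \<times> {..<(3::nat)^k})"
  have tester:
    "(convex_fin {..<3^k} (\<lambda>x. real (hard_input k c i x))
        \<longrightarrow> accept_prob T (hard_input k c i) \<ge> 2/3)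
      \<and> (far_from_convex (1/9) {..<3^k} (\<lambda>x. real (hard_input k c i x))
        \<longrightarrow> 1 - accept_prob T (hard_input k c i) \<ge> 2/3)"
    for c i
    using assms(1,2) hard_input_in_fun_class[of k c i] unfolding convexity_tester_def by simp
  have "real (card {1..<k}) / 3 \<le> q"
  proof (rule yao_averaging_bound[where S = S and yes = "\<lambda>c. hard_input k c 0"
        and no = "\<lambda>i c. hard_input k c i"])
    show "finite S" "S \<noteq> {}" "finite {1..<k}"
      by (auto simp: S_def)
    show "2/3 \<le> accept_prob T (hard_input k c 0)" for c
      using tester[of c 0] convex_hard_input_yes by blast
    show "2/3 \<le> 1 - accept_prob T (hard_input k c i)" if "i \<in> {1..<k}" for i c
      using tester[of c i] far_from_convex_hard_input that by auto
    show "(\<Sum>i\<in>{1..<k}. \<Sum>c\<in>S. of_bool (run t (hard_input k c 0)) - of_bool (run t (hard_input k c i)))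
        \<le> real q * card S" if "t \<in> set_pmf T" for t
      using decision_tree_advantage_le[of k t q] assms(1,3) that unfolding makes_at_most_def S_def by auto
  qed
  then show ?thesis
    by simp
qed

lemma tester_on_three_points_queries_pos:
  assumes "convexity_tester (1/9) 3 R T" "makes_at_most R T q" "2 \<le> R"
  shows "1 \<le> q"
proof (rule ccontr)
  assume "\<not> 1 \<le> q"
  then have "q = 0"
    by simp
  with assms(2) have "makes_at_most R T 0"
    by simp
  then have same: "accept_prob T (\<lambda>_. 0) = accept_prob T (\<lambda>x. of_bool (x = 1))"
    by (rule accept_prob_eq_if_no_queries)
  have tester: "(convex_fin {..<3} (\<lambda>x. real (f x)) \<longrightarrow> accept_prob T f \<ge> 2/3)
      \<and> (far_from_convex (1/9) {..<3} (\<lambda>x. real (f x)) \<longrightarrow> 1 - accept_prob T f \<ge> 2/3)"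
    if "f \<in> fun_class 3 R" for f
    using assms(1) that unfolding convexity_tester_def by blast
  have "(\<lambda>_. 0) \<in> fun_class 3 R" "(\<lambda>x. of_bool (x = 1)) \<in> fun_class 3 R"
    using assms(3) by (auto simp: fun_class_def)
  then have "2/3 \<le> accept_prob T (\<lambda>_. 0)" "2/3 \<le> 1 - accept_prob T (\<lambda>x. of_bool (x = 1))"
    using tester spike_far_from_convex by (simp_all add: convex_fin_def)
  then show False
    using same by simp
qed

theorem theorem6p2:
  shows "\<exists>c>0. \<forall>k::nat. k \<ge> 1 \<longrightarrow>
           (\<forall>T q. convexity_tester (1/9) (3^k) ((9*k)^(3*k)) T \<and>
                  makes_at_most ((9*k)^(3*k)) T q \<longrightarrow> c * real k \<le> real q)"
proof (intro exI[of _ "1/6"] conjI allI impI)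
  fix k :: nat and T q
  assume "1 \<le> k"
    and tester: "convexity_tester (1/9) (3^k) ((9*k)^(3*k)) T \<and> makes_at_most ((9*k)^(3*k)) T q"
  show "1/6 * real k \<le> real q"
  proof (cases "k = 1")
    case True
    then show ?thesis
      using tester_on_three_points_queries_pos[of "9^3" T q] tester by simp
  next
    case False
    then show ?thesis
      using tester_query_lower_bound[of k T q] tester \<open>1 \<le> k\<close> by (simp add: of_nat_diff)
  qed
qed simp

end
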